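(* A collection $(p^{(n)}_k)^{n\geq1}_{k\leq n}$ where $p^{(n)}_k$ is a non-negative, symmetric function on $\{(n_1,\dots,n_k):\,\sum_{j=1}^k n_j=n\}$, is an EPerPF if and only if it satisfies $$p^{(1)}(1)=1,\qquad p^{(n)}_{k(\pi)}(\mathrm{c}(\pi))=\sum_{\sigma\in\mathcal{A}(\pi)}p_{k(\sigma)}^{(n+1)}(\mathrm{c}(\sigma))\quad\text{for any }\pi\in\mathcal S_n.$$
   Context: $\mathcal S_n$ is the symmetric group on $[n]$. For $\pi\in\mathcal S_n$, $k(\pi)$ is its number of cycles and $\mathrm{c}(\pi)=(c_1(\pi),\dots,c_{k(\pi)}(\pi))$ its vector of cycle lengths (cycles written starting from their least element and ordered by first elements). The deletion map $\operatorname{del}:\mathcal S_{n+1}\to\mathcal S_n$ is $\operatorname{del}(\sigma)(i)=\sigma(i)$ if $i\neq\sigma^{-1}(n+1)$ and $\operatorname{del}(\sigma)(i)=\sigma(n+1)$ if $i=\sigma^{-1}(n+1)$ (it deletes $n+1$ from the cycle representation), and $\mathcal A(\pi)=\{\sigma\in\mathcal S_{n+1}:\operatorname{del}(\sigma)=\pi\}$ (so $|\mathcal A(\pi)|=n+1$). A random permutation is finitely exchangeable if permutations with equal cycle type have equal probability; it is exchangeable if its law is the $n$-th element of a sequence of laws of finitely exchangeable random permutations $\boldsymbol\pi_m\in\mathcal S_m$ that is consistent in the sense $\operatorname{del}(\boldsymbol\pi_{m+1})\overset{d}{=}\boldsymbol\pi_m$. Such laws are exactly those with pmf $p(\pi)=\varphi^{(n)}_k(n_1,\dots,n_k)/\prod_{j=1}^k(n_j-1)!$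 for an EPPF $(\varphi^{(n)})$ and cycle lengths $(n_1,\dots,n_k)$ of $\pi$. An EPerPF (exchangeable permutation probability function) is the sequence $(p^{(n)})_{n\geq1}$ of functions of this form determining such a consistent sequence of laws of exchangeable random permutations. *)

theory Defs
  imports "HOL-Probability.Probability" "HOL-Combinatorics.Permutations"
begin

text \<open>Permutations of [n] are functions nat => nat that permute {1..n}.\<close>

definition cycle_of :: "(nat \<Rightarrow> nat) \<Rightarrow> nat \<Rightarrow> nat set" where
  "cycle_of \<pi> i = {(\<pi> ^^ m) i | m. True}"

definition cyc :: "nat \<Rightarrow> (nat \<Rightarrow> nat) \<Rightarrow> nat list" where
  "cyc n \<pi> = map (\<lambda>i. card (cycle_of \<pi> i))
      (sorted_list_of_set {i \<in> {1..n}. i = Min (cycle_of \<pi> i)})"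

definition ncyc :: "nat \<Rightarrow> (nat \<Rightarrow> nat) \<Rightarrow> nat" where
  "ncyc n \<pi> = length (cyc n \<pi>)"

definition del :: "nat \<Rightarrow> (nat \<Rightarrow> nat) \<Rightarrow> (nat \<Rightarrow> nat)" where
  "del n \<sigma> i = (if i \<in> {1..n} then (if \<sigma> i = Suc n then \<sigma> (Suc n) else \<sigma> i) else i)"

definition A :: "nat \<Rightarrow> (nat \<Rightarrow> nat) \<Rightarrow> (nat \<Rightarrow> nat) set" where
  "A n \<pi> = {\<sigma>. \<sigma> permutes {1..Suc n} \<and> del n \<sigma> = \<pi>}"

definition composition :: "nat \<Rightarrow> nat list \<Rightarrow> bool" where
  "composition n xs \<longleftrightarrow> (\<forall>x\<in>set xs. 0 < x) \<and> sum_list xs = n"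

definition fin_exchangeable :: "nat \<Rightarrow> (nat \<Rightarrow> nat) pmf \<Rightarrow> bool" where
  "fin_exchangeable n P \<longleftrightarrow> set_pmf P \<subseteq> {\<pi>. \<pi> permutes {1..n}} \<and>
     (\<forall>\<pi> \<tau>. \<pi> permutes {1..n} \<longrightarrow> \<tau> permutes {1..n} \<longrightarrow>
        mset (cyc n \<pi>) = mset (cyc n \<tau>) \<longrightarrow> pmf P \<pi> = pmf P \<tau>)"

text \<open>p n xs stands for p^{(n)}_{length xs}(xs). p is an EPerPF if it is the
  pmf (through cycle lengths) of a consistent sequence of finitely exchangeable
  random permutations.\<close>
definition EPerPF :: "(nat \<Rightarrow> nat list \<Rightarrow> real) \<Rightarrow> bool" where
  "EPerPF p \<longleftrightarrow> (\<exists>P :: nat \<Rightarrow> (nat \<Rightarrow> nat) pmf.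
     (\<forall>n\<ge>1. fin_exchangeable n (P n)) \<and>
     (\<forall>n\<ge>1. map_pmf (del n) (P (Suc n)) = P n) \<and>
     (\<forall>n\<ge>1. \<forall>\<pi>. \<pi> permutes {1..n} \<longrightarrow> pmf (P n) \<pi> = p n (cyc n \<pi>)))"

end

theory Submission
  imports Defs "HOL-Combinatorics.Orbits"
begin

text \<open>Forward direction: the pmf of \<open>del(\<pi>\<^sub>n\<^sub>+\<^sub>1)\<close> at \<open>\<pi>\<close> is the mass of the fibre
  \<open>\<A>(\<pi>)\<close>, which is the recursion, and \<open>\<pi>\<^sub>1\<close> is the point mass at the identity, whose
  cycle vector is \<open>(1)\<close>. Backward direction: weight each \<open>\<pi> \<in> \<S>\<^sub>n\<close> by \<open>p(c(\<pi>))\<close>.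
  Deletion maps \<open>\<S>\<^sub>n\<^sub>+\<^sub>1\<close> into \<open>\<S>\<^sub>n\<close>, so the fibres \<open>\<A>(\<pi>)\<close> partition \<open>\<S>\<^sub>n\<^sub>+\<^sub>1\<close> and
  the recursion shows inductively that the weights sum to \<open>1\<close>; the resulting laws
  are consistent by the recursion once more and exchangeable by symmetry of \<open>p\<close>.\<close>

lemma cycle_of_eq_orbit:
  assumes "permutation \<pi>"
  shows "cycle_of \<pi> i = orbit \<pi> i"
  using assms unfolding cycle_of_def by (simp add: orbit_altdef_permutation)

lemma orbit_eq_if_mem_orbit:
  assumes "permutation f" "j \<in> orbit f i"
  shows "orbit f j = orbit f i"
  using orbit_cyclic_eq3[OF cyclic_on_orbit' assms(2)] assms(1) .

lemma sum_card_orbits_of_leaders: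
  fixes f :: "'a::linorder \<Rightarrow> 'a"
  assumes perm: "f permutes S" and fin: "finite S"
  shows "(\<Sum>i\<in>{i\<in>S. i = Min (orbit f i)}. card (orbit f i)) = card S"
proof -
  define R where "R = {i\<in>S. i = Min (orbit f i)}"
  have f: "permutation f" using perm fin by (auto simp: permutation_permutes)
  have sub: "orbit f i \<subseteq> S" if "i \<in> S" for i
    using permutes_orbit_subset[OF perm that] .
  have disj: "orbit f i \<inter> orbit f j = {}" if "i \<in> R" "j \<in> R" "i \<noteq> j" for i j
  proof (rule ccontr)
    assume "orbit f i \<inter> orbit f j \<noteq> {}"
    then obtain x where "x \<in> orbit f i" "x \<in> orbit f j" by auto
    then have "orbit f i = orbit f j" using orbit_eq_if_mem_orbit[OF f] by metis
    then show False using that unfolding R_def by auto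
  qed
  have cover: "(\<Union>i\<in>R. orbit f i) = S"
  proof
    show "(\<Union>i\<in>R. orbit f i) \<subseteq> S" using sub unfolding R_def by auto
    show "S \<subseteq> (\<Union>i\<in>R. orbit f i)"
    proof
      fix j assume j: "j \<in> S"
      define i where "i = Min (orbit f j)"
      have "i \<in> orbit f j"
        unfolding i_def using finite_orbit[OF permutation_self_in_orbit[OF f]] orbit_nonempty
        by (rule Min_in)
      then have "orbit f i = orbit f j" using orbit_eq_if_mem_orbit[OF f] by blast
      moreover have "i \<in> S" using \<open>i \<in> orbit f j\<close> sub[OF j] by auto
      ultimately have "i \<in> R" unfolding R_def i_def by simp
      then show "j \<in> (\<Union>i\<in>R. orbit f i)"
        using \<open>orbit f i = orbit f j\<close> permutation_self_in_orbit[OF f, of j] by auto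
    qed
  qed
  have "(\<Sum>i\<in>R. card (orbit f i)) = card (\<Union>i\<in>R. orbit f i)"
    using fin finite_orbit[OF permutation_self_in_orbit[OF f]] disj unfolding R_def
    by (intro card_UN_disjoint[symmetric]) auto
  also have "\<dots> = card S" by (simp only: cover)
  finally show ?thesis unfolding R_def .
qed

lemma cyc_composition:
  assumes "\<pi> permutes {1..n}"
  shows "composition n (cyc n \<pi>)"
proof -
  have \<pi>: "permutation \<pi>" using assms by (auto simp: permutation_permutes)
  define R where "R = {i \<in> {1..n}. i = Min (orbit \<pi> i)}"
  have cyc: "cyc n \<pi> = map (\<lambda>i. card (orbit \<pi> i)) (sorted_list_of_set R)"
    unfolding cyc_def R_def cycle_of_eq_orbit[OF \<pi>] ..
  have "finite (orbit \<pi> i)" for i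
    using finite_orbit[OF permutation_self_in_orbit[OF \<pi>]] .
  then have "\<forall>x\<in>set (cyc n \<pi>). 0 < x"
    unfolding cyc by (auto simp: card_gt_0_iff orbit_nonempty)
  moreover have "sum_list (cyc n \<pi>) = (\<Sum>i\<in>R. card (orbit \<pi> i))"
    unfolding cyc R_def by (simp add: sum_list_distinct_conv_sum_set)
  moreover have "(\<Sum>i\<in>R. card (orbit \<pi> i)) = n"
    using sum_card_orbits_of_leaders[OF assms] unfolding R_def by simp
  ultimately show ?thesis
    unfolding composition_def by simp
qed

lemma cycle_of_id: "cycle_of id i = {i}"
  unfolding cycle_of_def by simp

lemma cyc_1_id: "cyc 1 id = [1]"
  unfolding cyc_def by (simp add: cycle_of_id)

lemma del_eq_transpose_comp:
  assumes "\<sigma> permutes {1..Suc n}"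
  shows "del n \<sigma> = Transposition.transpose (Suc n) (\<sigma> (Suc n)) \<circ> \<sigma>"
proof
  fix i
  have "\<sigma> (Suc n) \<in> {1..Suc n}" using permutes_in_image[OF assms] by simp
  moreover have "\<sigma> i = i" if "i \<notin> {1..Suc n}" using permutes_not_in[OF assms that] .
  moreover have "\<sigma> i = \<sigma> (Suc n) \<longleftrightarrow> i = Suc n"
    using permutes_inj[OF assms] by (auto dest: injD)
  ultimately show "del n \<sigma> i = (Transposition.transpose (Suc n) (\<sigma> (Suc n)) \<circ> \<sigma>) i"
    unfolding del_def Transposition.transpose_def by auto
qed

lemma del_permutes:
  assumes "\<sigma> permutes {1..Suc n}"
  shows "del n \<sigma> permutes {1..n}"
proof -
  have "\<sigma> (Suc n) \<in> {1..Suc n}" using permutes_in_image[OF assms] by simp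
  then have "del n \<sigma> permutes {1..Suc n}"
    unfolding del_eq_transpose_comp[OF assms]
    by (intro permutes_compose[OF assms] permutes_swap_id) auto
  then show ?thesis by (rule permutes_superset) (auto simp: del_def)
qed

lemma A_eq_empty:
  assumes "\<not> \<pi> permutes {1..n}"
  shows "A n \<pi> = {}"
  using assms del_permutes unfolding A_def by blast

lemma finite_A: "finite (A n \<pi>)"
  by (rule finite_subset[OF _ finite_permutations[of "{1..Suc n}"]]) (auto simp: A_def)

lemma pmf_map_del:
  assumes "set_pmf M \<subseteq> {\<sigma>. \<sigma> permutes {1..Suc n}}"
  shows "pmf (map_pmf (del n) M) \<pi> = (\<Sum>\<sigma>\<in>A n \<pi>. pmf M \<sigma>)"
proof -
  have "pmf (map_pmf (del n) M) \<pi> = measure M (del n -` {\<pi>} \<inter> set_pmf M)"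
    by (simp add: pmf_map measure_Int_set_pmf)
  also have "del n -` {\<pi>} \<inter> set_pmf M = A n \<pi> \<inter> set_pmf M"
    using assms unfolding A_def by auto
  also have "measure M \<dots> = (\<Sum>\<sigma>\<in>A n \<pi>. pmf M \<sigma>)"
    by (simp add: measure_Int_set_pmf measure_measure_pmf_finite[OF finite_A])
  finally show ?thesis .
qed

lemma sum_permutes_Suc_by_del:
  "(\<Sum>\<sigma> | \<sigma> permutes {1..Suc n}. g \<sigma>) = (\<Sum>\<pi> | \<pi> permutes {1..n}. \<Sum>\<sigma>\<in>A n \<pi>. g \<sigma>)"
proof -
  have "del n ` {\<sigma>. \<sigma> permutes {1..Suc n}} \<subseteq> {\<pi>. \<pi> permutes {1..n}}"
    using del_permutes by auto
  from sum.group[OF _ _ this, of g] show ?thesis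
    by (simp add: finite_permutations A_def conj_commute)
qed

lemma pmf_embed_pmf_finite_support:
  fixes f :: "'a \<Rightarrow> real"
  assumes "finite S" "\<And>x. 0 \<le> f x" "\<And>x. x \<notin> S \<Longrightarrow> f x = 0" "sum f S = 1"
  shows "pmf (embed_pmf f) x = f x"
proof (rule pmf_embed_pmf)
  show "0 \<le> f x" for x by fact
  have "(\<integral>\<^sup>+x. ennreal (f x) \<partial>count_space UNIV) = (\<Sum>x\<in>S. ennreal (f x))"
    using assms(1,3) by (intro nn_integral_count_space') auto
  then show "(\<integral>\<^sup>+x. ennreal (f x) \<partial>count_space UNIV) = 1"
    using assms(2,4) by (simp add: sum_ennreal[symmetric])
qed

definition deletion_consistent :: "(nat \<Rightarrow> nat list \<Rightarrow> real) \<Rightarrow> bool" where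
  "deletion_consistent p \<longleftrightarrow> (\<forall>n\<ge>1. \<forall>\<pi>. \<pi> permutes {1..n} \<longrightarrow>
     p n (cyc n \<pi>) = (\<Sum>\<sigma>\<in>A n \<pi>. p (Suc n) (cyc (Suc n) \<sigma>)))"

lemma EPerPF_imp_initial:
  assumes "EPerPF p"
  shows "p 1 [1] = 1"
proof -
  obtain P where fe: "fin_exchangeable 1 (P 1)" and pmf: "pmf (P 1) id = p 1 (cyc 1 id)"
    using assms permutes_id unfolding EPerPF_def by fastforce
  have "set_pmf (P 1) \<subseteq> {\<pi>. \<pi> permutes {1..1}}"
    using fe unfolding fin_exchangeable_def by blast
  then have "P 1 = return_pmf id" by (simp add: set_pmf_subset_singleton)
  then show ?thesis using pmf unfolding cyc_1_id by simp
qed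

lemma EPerPF_imp_deletion_consistent:
  assumes "EPerPF p"
  shows "deletion_consistent p"
  unfolding deletion_consistent_def
proof (intro allI impI)
  fix n :: nat and \<pi> assume n: "n \<ge> 1" and \<pi>: "\<pi> permutes {1..n}"
  obtain P where fe: "fin_exchangeable (Suc n) (P (Suc n))"
    and cons: "map_pmf (del n) (P (Suc n)) = P n"
    and pmf: "\<And>m \<tau>. m \<ge> 1 \<Longrightarrow> \<tau> permutes {1..m} \<Longrightarrow> pmf (P m) \<tau> = p m (cyc m \<tau>)"
    using assms n unfolding EPerPF_def by (metis le_SucI order_refl)
  have "p n (cyc n \<pi>) = pmf (map_pmf (del n) (P (Suc n))) \<pi>"
    using pmf[OF n \<pi>] cons by simp
  also have "\<dots> = (\<Sum>\<sigma>\<in>A n \<pi>. pmf (P (Suc n)) \<sigma>)"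
    using fe unfolding fin_exchangeable_def by (intro pmf_map_del) blast
  also have "\<dots> = (\<Sum>\<sigma>\<in>A n \<pi>. p (Suc n) (cyc (Suc n) \<sigma>))"
    by (intro sum.cong refl pmf) (auto simp: A_def)
  finally show "p n (cyc n \<pi>) = (\<Sum>\<sigma>\<in>A n \<pi>. p (Suc n) (cyc (Suc n) \<sigma>))" .
qed

definition perm_weight :: "(nat \<Rightarrow> nat list \<Rightarrow> real) \<Rightarrow> nat \<Rightarrow> (nat \<Rightarrow> nat) \<Rightarrow> real" where
  "perm_weight p n \<pi> = (if \<pi> permutes {1..n} then p n (cyc n \<pi>) else 0)"

definition perm_pmf :: "(nat \<Rightarrow> nat list \<Rightarrow> real) \<Rightarrow> nat \<Rightarrow> (nat \<Rightarrow> nat) pmf" where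
  "perm_pmf p n = embed_pmf (perm_weight p n)"

lemma sum_A_perm_weight:
  assumes "deletion_consistent p" "n \<ge> 1"
  shows "(\<Sum>\<sigma>\<in>A n \<pi>. perm_weight p (Suc n) \<sigma>) = perm_weight p n \<pi>"
proof (cases "\<pi> permutes {1..n}")
  case True
  have "(\<Sum>\<sigma>\<in>A n \<pi>. perm_weight p (Suc n) \<sigma>) = (\<Sum>\<sigma>\<in>A n \<pi>. p (Suc n) (cyc (Suc n) \<sigma>))"
    by (intro sum.cong refl) (simp add: perm_weight_def A_def)
  then show ?thesis
    using assms True unfolding deletion_consistent_def perm_weight_def by simp
next
  case False
  then show ?thesis by (simp add: A_eq_empty perm_weight_def)
qed

context
  fixes p :: "nat \<Rightarrow> nat list \<Rightarrow> real"
  assumes nonneg: "\<And>n xs. n \<ge> 1 \<Longrightarrow> composition n xs \<Longrightarrow> p n xs \<ge> 0"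
    and initial: "p 1 [1] = 1"
    and consistent: "deletion_consistent p"
begin

lemma sum_perm_weight:
  assumes "n \<ge> 1"
  shows "(\<Sum>\<pi> | \<pi> permutes {1..n}. perm_weight p n \<pi>) = 1"
  using assms
proof (induction n rule: nat_induct_at_least)
  case base
  have "{\<pi>. \<pi> permutes {1..1::nat}} = {id}" by auto
  moreover have "perm_weight p 1 id = 1"
    using initial permutes_id unfolding perm_weight_def cyc_1_id by simp
  ultimately show ?case by (simp add: id_def)
next
  case (Suc n)
  have "(\<Sum>\<sigma> | \<sigma> permutes {1..Suc n}. perm_weight p (Suc n) \<sigma>) =
      (\<Sum>\<pi> | \<pi> permutes {1..n}. \<Sum>\<sigma>\<in>A n \<pi>. perm_weight p (Suc n) \<sigma>)"
    by (rule sum_permutes_Suc_by_del)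
  also have "\<dots> = (\<Sum>\<pi> | \<pi> permutes {1..n}. perm_weight p n \<pi>)"
    using sum_A_perm_weight[OF consistent Suc.hyps] by simp
  finally show ?case using Suc.IH by simp
qed

lemma pmf_perm_pmf:
  assumes "n \<ge> 1"
  shows "pmf (perm_pmf p n) \<pi> = perm_weight p n \<pi>"
  unfolding perm_pmf_def
proof (rule pmf_embed_pmf_finite_support)
  show "finite {\<pi>. \<pi> permutes {1..n}}" by (simp add: finite_permutations)
  show "0 \<le> perm_weight p n \<tau>" for \<tau>
    using nonneg[OF assms cyc_composition] by (simp add: perm_weight_def)
  show "perm_weight p n \<tau> = 0" if "\<tau> \<notin> {\<pi>. \<pi> permutes {1..n}}" for \<tau>
    using that by (simp add: perm_weight_def)
  show "sum (perm_weight p n) {\<pi>. \<pi> permutes {1..n}} = 1"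
    using sum_perm_weight[OF assms] by simp
qed

lemma set_perm_pmf:
  assumes "n \<ge> 1"
  shows "set_pmf (perm_pmf p n) \<subseteq> {\<pi>. \<pi> permutes {1..n}}"
  using pmf_perm_pmf[OF assms] by (auto simp: set_pmf_iff perm_weight_def split: if_splits)

lemma map_pmf_del_perm_pmf:
  assumes "n \<ge> 1"
  shows "map_pmf (del n) (perm_pmf p (Suc n)) = perm_pmf p n"
proof (rule pmf_eqI)
  fix \<pi>
  have "pmf (map_pmf (del n) (perm_pmf p (Suc n))) \<pi> = (\<Sum>\<sigma>\<in>A n \<pi>. perm_weight p (Suc n) \<sigma>)"
    using set_perm_pmf[of "Suc n"] pmf_perm_pmf[of "Suc n"] by (simp add: pmf_map_del)
  then show "pmf (map_pmf (del n) (perm_pmf p (Suc n))) \<pi> = pmf (perm_pmf p n) \<pi>"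
    using assms by (simp add: sum_A_perm_weight[OF consistent] pmf_perm_pmf)
qed

lemma deletion_consistent_imp_EPerPF:
  assumes symm: "\<And>n xs ys. n \<ge> 1 \<Longrightarrow> composition n xs \<Longrightarrow> mset ys = mset xs \<Longrightarrow> p n ys = p n xs"
  shows "EPerPF p"
  unfolding EPerPF_def
proof (intro exI[of _ "perm_pmf p"] conjI allI impI)
  fix n :: nat assume n: "n \<ge> 1"
  show "fin_exchangeable n (perm_pmf p n)"
    unfolding fin_exchangeable_def
  proof (intro conjI allI impI)
    show "set_pmf (perm_pmf p n) \<subseteq> {\<pi>. \<pi> permutes {1..n}}" by (rule set_perm_pmf[OF n])
    fix \<pi> \<tau>
    assume "\<pi> permutes {1..n}" and \<tau>: "\<tau> permutes {1..n}" and "mset (cyc n \<pi>) = mset (cyc n \<tau>)"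
    moreover have "p n (cyc n \<pi>) = p n (cyc n \<tau>)"
      using symm[OF n cyc_composition[OF \<tau>]] \<open>mset (cyc n \<pi>) = mset (cyc n \<tau>)\<close> .
    ultimately show "pmf (perm_pmf p n) \<pi> = pmf (perm_pmf p n) \<tau>"
      by (simp add: pmf_perm_pmf[OF n] perm_weight_def)
  qed
  show "map_pmf (del n) (perm_pmf p (Suc n)) = perm_pmf p n"
    using map_pmf_del_perm_pmf[OF n] .
  show "pmf (perm_pmf p n) \<pi> = p n (cyc n \<pi>)" if "\<pi> permutes {1..n}" for \<pi>
    using that by (simp add: pmf_perm_pmf[OF n] perm_weight_def)
qed

end

theorem theorem2:
  fixes p :: "nat \<Rightarrow> nat list \<Rightarrow> real"
  assumes nonneg: "\<And>n xs. n \<ge> 1 \<Longrightarrow> composition n xs \<Longrightarrow> p n xs \<ge> 0"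
    and symm: "\<And>n xs ys. n \<ge> 1 \<Longrightarrow> composition n xs \<Longrightarrow> mset ys = mset xs \<Longrightarrow> p n ys = p n xs"
  shows "EPerPF p \<longleftrightarrow>
    (p 1 [1] = 1 \<and>
     (\<forall>n\<ge>1. \<forall>\<pi>. \<pi> permutes {1..n} \<longrightarrow>
        p n (cyc n \<pi>) = (\<Sum>\<sigma>\<in>A n \<pi>. p (Suc n) (cyc (Suc n) \<sigma>))))"
  using EPerPF_imp_initial[of p] EPerPF_imp_deletion_consistent[of p]
    deletion_consistent_imp_EPerPF[of p] nonneg symm
  unfolding deletion_consistent_def by blast

end
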